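(* Let $V$ be a finite nonempty set, $U,U'\subseteq V$ disjoint, $U''=V\setminus(U\cup U')$, $i\in U$, $j\in U'$, and $\hat x$ a maximally specific partial function on $P_V$. Let $P'_{01}=\{pq\in U\times U'\mid \hat x_{pi}\neq 0\neq \hat x_{jq}\}\setminus\hat x^{-1}(1)$ and $P'_{10}=\big((U''\times U)\cup(U'\times U)\cup(U'\times U'')\big)\setminus\hat x^{-1}(0)$. Then $P_{01}[\gamma^{ij|1}]\subseteq P'_{01}$ and $P_{10}[\gamma^{ij|1}]\subseteq P'_{10}$.
   Context: $P_V=\{pq\in V^2\mid p\neq q\}$; $X_V$ is the set of $x\in\{0,1\}^{P_V}$ with $x_{pq}+x_{qr}-x_{pr}\le 1$ for all pairwise distinct $p,q,r\in V$. A partial function $\tilde x$ is a map from $\operatorname{dom}(\tilde x)\subseteq P_V$ to $\{0,1\}$, $\tilde x^{-1}(b)$ the pairs mapped to $b$; convention $\tilde x_{aa}=1$ and $x_{aa}=1$ for all $a\in V$, $x\in X_V$. $X_V[\tilde x]=\{x\in X_V\mid x_{pq}=\tilde x_{pq}\ \forall pq\in\operatorname{dom}(\tilde x)\}$. A pair $pq$ is decided if $x_{pq}=x'_{pq}$ for all $x,x'\in X_V[\tilde x]$; $\tilde x$ is maximally specific if $X_V[\tilde x]\ne\emptyset$ and the decided pairs are exactly $\operatorname{dom}(\tilde x)$. For $A,B\subseteq V$ disjoint with $A\cup B=V$, the dicut map $\sigma_{A\times B}\colon X_V\to X_V$ sets $\sigma_{A\times B}(x)_{pq}=0$ if $pq\in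 A\times B$ and $=x_{pq}$ otherwise. For $ij\in P_V$, the join map $\sigma_{ij}\colon X_V\to X_V$ sets $\sigma_{ij}(x)_{pq}=1$ if $x_{pi}=x_{jq}=1$ and $=x_{pq}$ otherwise. Let $\gamma=\sigma_{ij}\circ\sigma_{(V\setminus U)\times U}\circ\sigma_{U'\times(V\setminus U')}$ and $\gamma^{ij|1}\colon X_V[\hat x]\to X_V$ with $\gamma^{ij|1}(x)=x$ if $x_{ij}=1$ and $\gamma^{ij|1}(x)=\gamma(x)$ if $x_{ij}=0$. For a map $\sigma\colon X_V[\hat x]\to X_V$ and $a,b\in\{0,1\}$, $P_{ab}[\sigma]=\{e\in P_V\mid\exists x\in X_V[\hat x]: x_e=a\wedge\sigma(x)_e=b\}$. *)

theory Defs
  imports Main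
begin

definition PV :: "'a set \<Rightarrow> ('a \<times> 'a) set" where
  "PV V = {(p, q). p \<in> V \<and> q \<in> V \<and> p \<noteq> q}"

definition xval :: "('a \<times> 'a \<Rightarrow> nat) \<Rightarrow> 'a \<Rightarrow> 'a \<Rightarrow> nat" where
  "xval x p q = (if p = q then 1 else x (p, q))"

definition XV :: "'a set \<Rightarrow> ('a \<times> 'a \<Rightarrow> nat) set" where
  "XV V = {x. (\<forall>e. e \<notin> PV V \<longrightarrow> x e = 0) \<and> (\<forall>e \<in> PV V. x e \<in> {0, 1}) \<and>
     (\<forall>p\<in>V. \<forall>q\<in>V. \<forall>r\<in>V. p \<noteq> q \<and> q \<noteq> r \<and> p \<noteq> r \<longrightarrow>
        x (p, q) + x (q, r) \<le> 1 + x (p, r))}"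

definition partial_fun :: "'a set \<Rightarrow> ('a \<times> 'a \<Rightarrow> nat option) \<Rightarrow> bool" where
  "partial_fun V xh \<longleftrightarrow> dom xh \<subseteq> PV V \<and> ran xh \<subseteq> {0, 1}"

definition pval :: "('a \<times> 'a \<Rightarrow> nat option) \<Rightarrow> 'a \<Rightarrow> 'a \<Rightarrow> nat option" where
  "pval xh p q = (if p = q then Some 1 else xh (p, q))"

definition XV_restr :: "'a set \<Rightarrow> ('a \<times> 'a \<Rightarrow> nat option) \<Rightarrow> ('a \<times> 'a \<Rightarrow> nat) set" where
  "XV_restr V xh = {x \<in> XV V. \<forall>e \<in> dom xh. xh e = Some (x e)}"

definition decided :: "'a set \<Rightarrow> ('a \<times> 'a \<Rightarrow> nat option) \<Rightarrow> 'a \<times> 'a \<Rightarrow> bool" where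
  "decided V xh e \<longleftrightarrow> (\<forall>x \<in> XV_restr V xh. \<forall>x' \<in> XV_restr V xh. x e = x' e)"

definition maximally_specific :: "'a set \<Rightarrow> ('a \<times> 'a \<Rightarrow> nat option) \<Rightarrow> bool" where
  "maximally_specific V xh \<longleftrightarrow> XV_restr V xh \<noteq> {} \<and>
     {e \<in> PV V. decided V xh e} = dom xh"

definition dicut_map :: "'a set \<Rightarrow> 'a set \<Rightarrow> ('a \<times> 'a \<Rightarrow> nat) \<Rightarrow> ('a \<times> 'a \<Rightarrow> nat)" where
  "dicut_map A B x = (\<lambda>e. if e \<in> A \<times> B then 0 else x e)"

definition join_map :: "'a set \<Rightarrow> 'a \<Rightarrow> 'a \<Rightarrow> ('a \<times> 'a \<Rightarrow> nat) \<Rightarrow> ('a \<times> 'a \<Rightarrow> nat)" where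
  "join_map V i j x = (\<lambda>(p, q). if (p, q) \<in> PV V \<and> xval x p i = 1 \<and> xval x j q = 1
                                 then 1 else x (p, q))"

definition gamma :: "'a set \<Rightarrow> 'a set \<Rightarrow> 'a set \<Rightarrow> 'a \<Rightarrow> 'a \<Rightarrow>
    ('a \<times> 'a \<Rightarrow> nat) \<Rightarrow> ('a \<times> 'a \<Rightarrow> nat)" where
  "gamma V U U' i j = join_map V i j \<circ> dicut_map (V - U) U \<circ> dicut_map U' (V - U')"

definition gamma1 :: "'a set \<Rightarrow> 'a set \<Rightarrow> 'a set \<Rightarrow> 'a \<Rightarrow> 'a \<Rightarrow>
    ('a \<times> 'a \<Rightarrow> nat) \<Rightarrow> ('a \<times> 'a \<Rightarrow> nat)" where
  "gamma1 V U U' i j x = (if xval x i j = 1 then x else gamma V U U' i j x)"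

definition Pab :: "'a set \<Rightarrow> ('a \<times> 'a \<Rightarrow> nat option) \<Rightarrow> nat \<Rightarrow> nat \<Rightarrow>
    (('a \<times> 'a \<Rightarrow> nat) \<Rightarrow> ('a \<times> 'a \<Rightarrow> nat)) \<Rightarrow> ('a \<times> 'a) set" where
  "Pab V xh a b \<sigma> = {e \<in> PV V. \<exists>x \<in> XV_restr V xh. x e = a \<and> \<sigma> x e = b}"

end

theory Submission
  imports Defs
begin

text \<open>If \<open>x\<^sub>i\<^sub>j = 1\<close> the map \<open>\<gamma>\<^sup>i\<^sup>j\<^sup>|\<^sup>1\<close> changes nothing. Otherwise the two dicut maps
  only switch entries off, namely on \<open>(V - U) \<times> U\<close> and \<open>U' \<times> (V - U')\<close>, and the join map
  switches \<open>pq\<close> on only if, after the cuts, \<open>x\<^sub>p\<^sub>i = x\<^sub>j\<^sub>q = 1\<close>; since those cuts have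
  removed every \<open>pi\<close> with \<open>p \<notin> U\<close> and every \<open>jq\<close> with \<open>q \<notin> U'\<close>, this forces
  \<open>pq \<in> U \<times> U'\<close>. An entry that changes from \<open>a\<close> cannot be fixed by \<open>x\<^sup>^\<close> to \<open>1 - a\<close>.
  The argument works for each \<open>x \<in> X\<^sub>V[x\<^sup>^]\<close> separately and uses only \<open>i \<in> U\<close>,
  \<open>j \<in> U'\<close> and \<open>U, U' \<subseteq> V\<close>.\<close>

lemma XV_restr_eq_Some:
  assumes "x \<in> XV_restr V xh" and "xh e = Some v"
  shows "x e = v"
  using assms unfolding XV_restr_def by force

lemma xval_eq_Some_pval:
  assumes "x \<in> XV_restr V xh" and "pval xh p q = Some v"
  shows "xval x p q = v"
  using assms XV_restr_eq_Some[OF assms(1)] unfolding pval_def xval_def by (auto split: if_splits)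

lemma xval_dicut_map_eq_1_iff:
  "xval (dicut_map A B x) p q = 1 \<longleftrightarrow> p = q \<or> ((p, q) \<notin> A \<times> B \<and> xval x p q = 1)"
  unfolding xval_def dicut_map_def by (auto split: if_splits)

lemma join_map_eq_1_iff:
  "join_map V i j y (p, q) = 1 \<longleftrightarrow>
     ((p, q) \<in> PV V \<and> xval y p i = 1 \<and> xval y j q = 1) \<or> y (p, q) = 1"
  unfolding join_map_def by auto

lemma join_map_eq_0D: "join_map V i j y e = 0 \<Longrightarrow> y e = 0"
  unfolding join_map_def by (auto split: prod.splits if_splits)

lemma gamma1_0_to_1D:
  assumes "i \<in> U" and "j \<in> U'" and "(p, q) \<in> PV V"
    and "x (p, q) = 0" and "gamma1 V U U' i j x (p, q) = 1"
  shows "p \<in> U \<and> q \<in> U' \<and> xval x p i = 1 \<and> xval x j q = 1"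
proof -
  let ?x' = "dicut_map U' (V - U') x"
  let ?y = "dicut_map (V - U) U ?x'"
  have "join_map V i j ?y (p, q) = 1"
    using assms(4,5) by (auto simp: gamma1_def gamma_def split: if_splits)
  moreover have "?y (p, q) = 0"
    using assms(4) by (simp add: dicut_map_def)
  ultimately have "xval ?y p i = 1" and "xval ?y j q = 1"
    using join_map_eq_1_iff[of V i j ?y p q] by auto
  then have "p = i \<or> ((p, i) \<notin> (V - U) \<times> U \<and> (p, i) \<notin> U' \<times> (V - U') \<and> xval x p i = 1)"
    and "j = q \<or> ((j, q) \<notin> (V - U) \<times> U \<and> (j, q) \<notin> U' \<times> (V - U') \<and> xval x j q = 1)"
    by (simp_all only: xval_dicut_map_eq_1_iff) blast+
  with assms(1-3) show ?thesis
    unfolding PV_def by (auto simp: xval_def)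
qed

lemma gamma1_1_to_0D:
  assumes "x e = 1" and "gamma1 V U U' i j x e = 0"
  shows "e \<in> (V - U) \<times> U \<union> U' \<times> (V - U')"
proof -
  have "dicut_map (V - U) U (dicut_map U' (V - U') x) e = 0"
    using assms by (auto simp: gamma1_def gamma_def split: if_splits dest: join_map_eq_0D)
  then show ?thesis
    using assms(1) by (auto simp: dicut_map_def split: if_splits)
qed

theorem lemma6p4:
  fixes V U U' :: "'a set" and i j :: 'a and xh :: "'a \<times> 'a \<Rightarrow> nat option"
  assumes "finite V" and "V \<noteq> {}"
    and "U \<subseteq> V" and "U' \<subseteq> V" and "U \<inter> U' = {}"
    and "i \<in> U" and "j \<in> U'"
    and "partial_fun V xh" and "maximally_specific V xh"
  shows "Pab V xh 0 1 (gamma1 V U U' i j) \<subseteq>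
           {(p, q). (p, q) \<in> U \<times> U' \<and> pval xh p i \<noteq> Some 0 \<and> pval xh j q \<noteq> Some 0}
             - {e. xh e = Some 1} \<and>
         Pab V xh 1 0 (gamma1 V U U' i j) \<subseteq>
           ((V - (U \<union> U')) \<times> U \<union> U' \<times> U \<union> U' \<times> (V - (U \<union> U')))
             - {e. xh e = Some 0}"
proof (intro conjI subsetI)
  fix e assume "e \<in> Pab V xh 0 1 (gamma1 V U U' i j)"
  then obtain p q x where e: "e = (p, q)" "(p, q) \<in> PV V" and x: "x \<in> XV_restr V xh"
    and "x (p, q) = 0" "gamma1 V U U' i j x (p, q) = 1"
    unfolding Pab_def by (cases e) auto
  with assms(6,7) have "p \<in> U" "q \<in> U'" "xval x p i = 1" "xval x j q = 1"
    using gamma1_0_to_1D[of i U j U' p q V x] by simp_all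
  moreover have "xh (p, q) \<noteq> Some 1"
    using XV_restr_eq_Some[OF x] \<open>x (p, q) = 0\<close> by force
  ultimately show "e \<in> {(p, q). (p, q) \<in> U \<times> U' \<and> pval xh p i \<noteq> Some 0 \<and>
      pval xh j q \<noteq> Some 0} - {e. xh e = Some 1}"
    using e xval_eq_Some_pval[OF x] by force
next
  fix e assume "e \<in> Pab V xh 1 0 (gamma1 V U U' i j)"
  then obtain x where e: "e \<in> PV V" and x: "x \<in> XV_restr V xh"
    and "x e = 1" "gamma1 V U U' i j x e = 0"
    unfolding Pab_def by auto
  then have "e \<in> (V - U) \<times> U \<union> U' \<times> (V - U')" and "xh e \<noteq> Some 0"
    using gamma1_1_to_0D[of x e] XV_restr_eq_Some[OF x, of e] by auto
  with e assms(3,4) show "e \<in> ((V - (U \<union> U')) \<times> U \<union> U' \<times> U \<union> U' \<times> (V - (U \<union> U')))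
      - {e. xh e = Some 0}"
    unfolding PV_def by blast
qed

end
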